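(* Let $f,g:\mathbb{R}\to\mathbb{R}^2$ be continuous injections that are homeomorphisms onto their images, and let $M\subseteq\mathbb{R}$ be closed and nowhere dense. Then $g(\mathbb{R})\cap f(M)$ is meager in the subspace $g(\mathbb{R})$. *)

theory Defs
  imports "HOL-Analysis.Analysis"
begin

definition nowhere_dense_in :: "'a topology \<Rightarrow> 'a set \<Rightarrow> bool" where
  "nowhere_dense_in X S \<longleftrightarrow> S \<subseteq> topspace X \<and> X interior_of (X closure_of S) = {}"

definition meager_in :: "'a topology \<Rightarrow> 'a set \<Rightarrow> bool" where
  "meager_in X S \<longleftrightarrow> S \<subseteq> topspace X \<and>
     (\<exists>F. countable F \<and> (\<forall>N\<in>F. nowhere_dense_in X N) \<and> S \<subseteq> \<Union>F)"

end

theory Submission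
  imports Defs
begin

(* - If U is open in g(E) and U \<subseteq> f(E), then the transition map f\<inverse> \<circ> g is a continuous
     injection on the open set g\<inverse>(U), so by invariance of domain f\<inverse>(U) is open in E.
     Hence g(E) \<inter> f(A) has empty interior in g(E) whenever A has empty interior.
   - For compact K, f(K) is compact, hence closed, so g(E) \<inter> f(K) is closed in g(E).
   - Writing M as the union of the compact sets M \<inter> cball 0 n, the set g(E) \<inter> f(M) is a
     countable union of closed sets with empty interior, i.e. of nowhere dense sets. *)

lemma nowhere_dense_in_closedin:
  assumes "closedin X S" and "X interior_of S = {}"
  shows "nowhere_dense_in X S"
  using assms by (simp add: nowhere_dense_in_def closure_of_closedin closedin_subset)

lemma meager_in_cover:
  assumes "S \<subseteq> topspace X" and "\<And>n::nat. nowhere_dense_in X (N n)" and "S \<subseteq> (\<Union>n. N n)"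
  shows "meager_in X S"
  unfolding meager_in_def using assms by (intro conjI exI[of _ "range N"]) auto

lemma nowhere_dense_imp_interior_empty:
  assumes "nowhere_dense_in euclidean M"
  shows "interior M = {}"
  using assms interior_mono[OF closure_subset, of M] by (auto simp: nowhere_dense_in_def)

text \<open>Invariance of domain for embeddings: a set open in the image of g and covered by the
  image of f is carried by the inverse of f to an open set.\<close>
lemma embedding_transition_open:
  fixes f g :: "'a::euclidean_space \<Rightarrow> 'b::topological_space"
  assumes hf: "homeomorphism UNIV (range f) f f'"
    and hg: "homeomorphism UNIV (range g) g g'"
    and U_open: "openin (top_of_set (range g)) U"
    and U_sub: "U \<subseteq> range f"
  shows "open (f' ` U)"
proof -
  have U_range_g: "U \<subseteq> range g"
    using U_open by (auto dest: openin_imp_subset)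
  have g_g': "g (g' y) = y" if "y \<in> range g" for y
    using hg that by (auto simp: homeomorphism_def)
  have f'_f: "f' (f x) = x" for x
    using hf by (simp add: homeomorphism_def)
  have g_image: "g ` g' ` U = U"
    using U_range_g g_g' by (force simp: image_image)
  have V_open: "open (g' ` U)"
    using homeomorphism_imp_open_map[OF homeomorphism_symD[OF hg] U_open] by simp
  have cont: "continuous_on (g' ` U) (f' \<circ> g)"
  proof (rule continuous_on_compose)
    show "continuous_on (g' ` U) g"
      using hg continuous_on_subset[of UNIV g "g' ` U"] by (simp add: homeomorphism_def)
    show "continuous_on (g ` g' ` U) f'"
      unfolding g_image using hf U_sub continuous_on_subset[of "range f" f' U]
      by (simp add: homeomorphism_def)
  qed
  have inj: "inj_on (f' \<circ> g) (g' ` U)"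
  proof
    fix x y assume "x \<in> g' ` U" "y \<in> g' ` U" and eq: "(f' \<circ> g) x = (f' \<circ> g) y"
    then obtain a b where "g x = f a" and "g y = f b"
      using g_image U_sub by blast
    then have "g x = g y"
      using eq f'_f by simp
    then show "x = y"
      using hg by (metis homeomorphism_apply1 UNIV_I)
  qed
  have "(f' \<circ> g) ` g' ` U = f' ` U"
    by (metis g_image image_comp)
  then show ?thesis
    using invariance_of_domain[OF cont V_open inj] by simp
qed

lemma embedding_image_interior_empty:
  fixes f g :: "'a::euclidean_space \<Rightarrow> 'b::topological_space"
  assumes hf: "homeomorphism UNIV (range f) f f'"
    and hg: "homeomorphism UNIV (range g) g g'"
    and A: "interior A = {}"
  shows "top_of_set (range g) interior_of (range g \<inter> f ` A) = {}"
  unfolding interior_of_eq_empty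
proof (intro allI impI)
  fix U assume U: "openin (top_of_set (range g)) U \<and> U \<subseteq> range g \<inter> f ` A"
  have "open (f' ` U)"
    using embedding_transition_open[OF hf hg] U by blast
  moreover have "f' ` U \<subseteq> A"
    using U hf by (auto simp: homeomorphism_def)
  ultimately have "f' ` U = {}"
    using A interior_maximal by blast
  then show "U = {}" by simp
qed

text \<open>The image of a compact set under a continuous map into a Hausdorff space is closed,
  so its trace on any subspace is relatively closed.\<close>
lemma continuous_image_compact_closedin:
  fixes f :: "'a::topological_space \<Rightarrow> 'b::t2_space"
  assumes "continuous_on K f" and "compact K"
  shows "closedin (top_of_set T) (T \<inter> f ` K)"
  using assms by (simp add: closedin_closed_Int compact_imp_closed compact_continuous_image)

theorem mainTheorem7:
  fixes f g :: "real \<Rightarrow> real^2" and M :: "real set"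
  assumes "\<exists>f'. homeomorphism UNIV (range f) f f'"
    and "\<exists>g'. homeomorphism UNIV (range g) g g'"
    and "closed M"
    and "nowhere_dense_in euclidean M"
  shows "meager_in (subtopology euclidean (range g)) (range g \<inter> f ` M)"
proof -
  obtain f' where hf: "homeomorphism UNIV (range f) f f'" using assms(1) by blast
  obtain g' where hg: "homeomorphism UNIV (range g) g g'" using assms(2) by blast
  have int_M: "interior M = {}"
    using assms(4) by (rule nowhere_dense_imp_interior_empty)
  define K where "K n = M \<inter> cball 0 (real n)" for n :: nat
  have nowhere_dense: "nowhere_dense_in (top_of_set (range g)) (range g \<inter> f ` K n)" for n
  proof (rule nowhere_dense_in_closedin)
    have "continuous_on (K n) f"
      using hf continuous_on_subset[of UNIV f "K n"] by (simp add: homeomorphism_def)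
    moreover have "compact (K n)"
      using assms(3) by (simp add: K_def closed_Int_compact)
    ultimately show "closedin (top_of_set (range g)) (range g \<inter> f ` K n)"
      by (rule continuous_image_compact_closedin)
    have "interior (K n) = {}"
      using int_M interior_mono[of "K n" M] by (auto simp: K_def)
    then show "top_of_set (range g) interior_of (range g \<inter> f ` K n) = {}"
      by (rule embedding_image_interior_empty[OF hf hg])
  qed
  have M_cover: "M \<subseteq> (\<Union>n. K n)"
  proof
    fix x assume "x \<in> M"
    obtain n :: nat where "norm x \<le> real n" using real_arch_simple by blast
    with \<open>x \<in> M\<close> show "x \<in> (\<Union>n. K n)" by (auto simp: K_def)
  qed
  show ?thesis
  proof (rule meager_in_cover[OF _ nowhere_dense])
    show "range g \<inter> f ` M \<subseteq> (\<Union>n. range g \<inter> f ` K n)"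
      using M_cover by blast
  qed simp
qed

end
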